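(* Let $\{\emptyset,\Omega\}=\mathcal{F}_0\subseteq\cdots\subseteq\mathcal{F}_n$ be $\sigma$-fields on a probability space and let $(\xi_i,\mathcal{F}_i)_{i=1,\dots,n}$ be supermartingale differences (each $\xi_i$ is $\mathcal{F}_i$-measurable, integrable, with $\mathbf{E}(\xi_i\mid\mathcal{F}_{i-1})\le0$). Suppose $\mathbf{E}|\xi_i|^\beta<\infty$ for a constant $\beta\in(1,2)$. Then for all $\lambda>0$, \[ \mathbf{E}\Big(\exp\big\{\lambda\xi_i-\lambda^\beta(\xi_i^+)^\beta\big\}\,\Big|\,\mathcal{F}_{i-1}\Big)\le\exp\Big\{\lambda^\beta\,\mathbf{E}\big((\xi_i^-)^\beta\mid\mathcal{F}_{i-1}\big)\Big\}, \] where $x^+=\max\{x,0\}$ and $x^-=-\min\{x,0\}$. *)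

theory Defs
  imports "HOL-Probability.Probability"
begin

end

theory Submission
  imports Defs
begin

text \<open>Pointwise, \<open>exp (y - (y\<^sup>+)\<^sup>\<beta>) \<le> 1 + y + (y\<^sup>-)\<^sup>\<beta>\<close> for \<open>1 \<le> \<beta> \<le> 2\<close>. Taking conditional
  expectations, the supermartingale property kills the linear term, and \<open>1 + u \<le> exp u\<close> gives
  the bound.\<close>

lemma exp_sub_powr_le_one_plus:
  fixes y b :: real
  assumes "1 \<le> b" "b \<le> 2" "0 \<le> y"
  shows "exp (y - y powr b) \<le> 1 + y"
proof (cases "y \<le> 1")
  case True
  have "y ^ 2 \<le> y powr b"
    using powr_mono'[of b 2 y] assms True by (simp add: powr_realpow)
  hence "exp (y - y powr b) \<le> exp (y - y ^ 2)" by simp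
  also have "\<dots> \<le> exp (ln (1 + y))"
    using ln_one_plus_pos_lower_bound[of y] assms True by (simp del: exp_ln_iff exp_ln)
  also have "\<dots> = 1 + y" using assms by simp
  finally show ?thesis .
next
  case False
  have "y \<le> y powr b" using powr_mono[of 1 b y] assms False by simp
  hence "exp (y - y powr b) \<le> 1" by simp
  thus ?thesis using assms by linarith
qed

lemma exp_minus_le_one_minus_plus_powr:
  fixes t b :: real
  assumes "1 \<le> b" "b \<le> 2" "0 \<le> t"
  shows "exp (- t) \<le> 1 - t + t powr b"
proof (cases "t \<le> 1")
  case True
  have "exp (- t) = 1 / exp t" by (simp add: exp_minus field_simps)
  also have "\<dots> \<le> 1 / (1 + t)"
    using exp_ge_add_one_self[of t] assms by (intro divide_left_mono) auto
  also have "\<dots> \<le> 1 - t + t ^ 2"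
  proof -
    have "(1 - t + t ^ 2) * (1 + t) = 1 + t ^ 3"
      by (simp add: algebra_simps power2_eq_square power3_eq_cube)
    thus ?thesis using assms by (simp add: divide_le_eq)
  qed
  also have "t ^ 2 \<le> t powr b"
    using powr_mono'[of b 2 t] assms True by (simp add: powr_realpow)
  finally show ?thesis by simp
next
  case False
  have "t \<le> t powr b" using powr_mono[of 1 b t] assms False by simp
  moreover have "exp (- t) \<le> 1" using assms by simp
  ultimately show ?thesis by linarith
qed

lemma exp_sub_pos_part_powr_le:
  fixes y b :: real
  assumes "1 \<le> b" "b \<le> 2"
  shows "exp (y - max y 0 powr b) \<le> 1 + y + (- min y 0) powr b"
  using exp_sub_powr_le_one_plus[OF assms, of y] exp_minus_le_one_minus_plus_powr[OF assms, of "- y"]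
  by (cases "0 \<le> y") simp_all

lemma exp_scaled_sub_pos_part_powr_le:
  fixes x b lam :: real
  assumes "1 \<le> b" "b \<le> 2" "0 < lam"
  shows "exp (lam * x - lam powr b * max x 0 powr b)
           \<le> 1 + lam * x + lam powr b * (- min x 0) powr b"
proof -
  have scale: "max (lam * x) 0 = lam * max x 0" "- min (lam * x) 0 = lam * (- min x 0)"
    using assms by (auto simp: max_def min_def mult_le_0_iff)
  have "max (lam * x) 0 powr b = lam powr b * max x 0 powr b"
    unfolding scale(1) using assms by (simp add: powr_mult)
  moreover have "(- min (lam * x) 0) powr b = lam powr b * (- min x 0) powr b"
    unfolding scale(2) using assms by (subst powr_mult) auto
  ultimately show ?thesis using exp_sub_pos_part_powr_le[OF assms(1,2), of "lam * x"] by simp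
qed

lemma (in finite_measure_subalgebra) real_cond_exp_le_exp_of_dominated:
  fixes X Y g :: "'a \<Rightarrow> real" and a b :: real
  assumes X: "integrable M X" and supmart: "AE x in M. real_cond_exp M F X x \<le> 0"
    and Y: "integrable M Y" and g: "g \<in> borel_measurable M"
    and "0 \<le> a" and g_nonneg: "\<And>y. 0 \<le> g y"
    and g_le: "\<And>y. g y \<le> 1 + a * X y + b * Y y"
  shows "AE x in M. real_cond_exp M F g x \<le> exp (b * real_cond_exp M F Y x)"
proof -
  define h where "h y = 1 + a * X y + b * Y y" for y
  have h: "integrable M h" unfolding h_def using X Y by auto
  have "integrable M g"
    using g_nonneg g_le
    by (intro Bochner_Integration.integrable_bound[OF h g] AE_I2)
       (auto simp: h_def intro: order_trans[OF _ abs_ge_self])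
  hence "AE x in M. real_cond_exp M F g x \<le> real_cond_exp M F h x"
    using g_le h by (intro real_cond_exp_mono) (auto simp: h_def)
  moreover have "AE x in M. real_cond_exp M F h x
      = real_cond_exp M F (\<lambda>y. 1 + a * X y) x + real_cond_exp M F (\<lambda>y. b * Y y) x"
    using real_cond_exp_add[of "\<lambda>y. 1 + a * X y" "\<lambda>y. b * Y y"] X Y
    unfolding h_def by (simp add: add.assoc)
  moreover have "AE x in M. real_cond_exp M F (\<lambda>y. 1 + a * X y) x
      = real_cond_exp M F (\<lambda>_. 1) x + real_cond_exp M F (\<lambda>y. a * X y) x"
    using real_cond_exp_add[of "\<lambda>_. 1" "\<lambda>y. a * X y"] X by auto
  moreover have "AE x in M. real_cond_exp M F (\<lambda>_. 1) x = 1"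
    by (rule real_cond_exp_F_meas) auto
  moreover note real_cond_exp_cmult[OF X, of a] real_cond_exp_cmult[OF Y, of b] supmart
  ultimately show ?thesis
  proof eventually_elim
    case (elim x)
    have "real_cond_exp M F g x \<le> 1 + b * real_cond_exp M F Y x"
      using elim mult_nonneg_nonpos[OF \<open>0 \<le> a\<close>, of "real_cond_exp M F X x"] by linarith
    also have "\<dots> \<le> exp (b * real_cond_exp M F Y x)" by (rule exp_ge_add_one_self)
    finally show ?case .
  qed
qed

theorem lemma5p1:
  fixes M :: "'a measure" and F :: "nat \<Rightarrow> 'a measure"
    and \<xi> :: "nat \<Rightarrow> 'a \<Rightarrow> real" and n :: nat and \<beta> :: real
  assumes prob: "prob_space M"
    and subalg: "\<And>k. k \<le> n \<Longrightarrow> subalgebra M (F k)"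
    and mono: "\<And>j k. j \<le> k \<Longrightarrow> k \<le> n \<Longrightarrow> sets (F j) \<subseteq> sets (F k)"
    and F0: "sets (F 0) = {{}, space M}"
    and meas: "\<And>k. 1 \<le> k \<Longrightarrow> k \<le> n \<Longrightarrow> \<xi> k \<in> borel_measurable (F k)"
    and integr: "\<And>k. 1 \<le> k \<Longrightarrow> k \<le> n \<Longrightarrow> integrable M (\<xi> k)"
    and supmart: "\<And>k. 1 \<le> k \<Longrightarrow> k \<le> n \<Longrightarrow>
                    AE x in M. real_cond_exp M (F (k - 1)) (\<xi> k) x \<le> 0"
    and beta: "1 < \<beta>" "\<beta> < 2"
    and moment: "\<And>k. 1 \<le> k \<Longrightarrow> k \<le> n \<Longrightarrow> integrable M (\<lambda>x. \<bar>\<xi> k x\<bar> powr \<beta>)"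
  shows "\<forall>i \<in> {1..n}. \<forall>lam::real. lam > 0 \<longrightarrow>
    (AE x in M.
       real_cond_exp M (F (i - 1))
         (\<lambda>y. exp (lam * \<xi> i y - lam powr \<beta> * (max (\<xi> i y) 0) powr \<beta>)) x
       \<le> exp (lam powr \<beta> * real_cond_exp M (F (i - 1)) (\<lambda>y. (- min (\<xi> i y) 0) powr \<beta>) x))"
proof (intro ballI allI impI)
  fix i and lam :: real
  assume "i \<in> {1..n}" and lam: "0 < lam"
  hence i: "1 \<le> i" "i \<le> n" by auto
  have [measurable]: "\<xi> i \<in> borel_measurable M"
    using measurable_from_subalg[OF subalg[OF i(2)] meas[OF i]] .
  interpret prob_space M by (rule prob)
  interpret finite_measure_subalgebra M "F (i - 1)"
    by unfold_locales (use subalg i in simp)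
  have "integrable M (\<lambda>y. (- min (\<xi> i y) 0) powr \<beta>)"
    using beta by (intro Bochner_Integration.integrable_bound[OF moment[OF i]])
                  (auto intro!: powr_mono2)
  then show "AE x in M.
       real_cond_exp M (F (i - 1))
         (\<lambda>y. exp (lam * \<xi> i y - lam powr \<beta> * (max (\<xi> i y) 0) powr \<beta>)) x
       \<le> exp (lam powr \<beta> * real_cond_exp M (F (i - 1)) (\<lambda>y. (- min (\<xi> i y) 0) powr \<beta>) x)"
    using integr[OF i] supmart[OF i] lam beta
    by (intro real_cond_exp_le_exp_of_dominated[where a = lam and X = "\<xi> i"])
       (auto intro: exp_scaled_sub_pos_part_powr_le)
qed

end
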